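(* Let $D\subset\tilde X=\mathrm{UT}\mathbb{H}^3$ be a view (material, ideal or hyperideal), with coordinates $(x_u,x_f,x_s)$ near $D$ and sets $D_\varepsilon$ as described in the context. Then for all $t\ge0$, all $0<\varepsilon<1$ and all $(x_u,x_f,x_s)\in D_\varepsilon$, \[d_{\tilde X}\big(\varphi_t(x_u),\varphi_t(x_u,x_f,x_s)\big)\le 2\varepsilon.\]
   Context: $\tilde X=\mathrm{UT}\mathbb{H}^3$ with a fixed isometry-invariant riemannian metric and distance $d_{\tilde X}$; $\pi\colon\tilde X\to\mathbb{H}^3$ is the projection and $\varphi_t$ the geodesic flow. A view $D$ is: $\mathrm{UT}_p\mathbb{H}^3$ (material); the outward normals to a horosphere (ideal); or the unit normals to a geodesic plane pointing to one side (hyperideal). For $x_u\in D$, let $H^s(x_u)\subset\tilde X$ be the set of inward-pointing unit normals to the horosphere through $\pi(x_u)$ centred at the ideal endpoint of the ray of $x_u$; it contains $x_u$. For a submanifold $N$, $d_N$ denotes the induced path metric. For $r\in\tilde X$ close to $D$ there is a unique $x_u\in D$ whose ray converges to the same ideal point as that of $r$; let $x_s$ be the intersection of $H^s(x_u)$ with the flow line through $r$, and $x_f$ the signed flow time from $x_s$ to $r$; then $r$ is written $(x_u,x_f,x_s)$, so $r=\varphi_{x_f}(x_s)$, and $(x_u,0,x_u)=x_u$. Set $B^s_\varepsilon(x_u)=\{x_s\in H^s(x_u): d_{H^s(x_u)}(x_u,x_s)\le\varepsilon\}$ and $D_\varepsilon=\{(x_u,x_f,x_s): x_u\in D,\ x_f\in(-\varepsilon,\varepsilon),\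 x_s\in B^s_\varepsilon(x_u)\}$. *)

theory Defs
  imports "HOL-Analysis.Analysis"
begin

type_synonym R4 = "real^4"
type_synonym TX = "R4 \<times> R4"

definition mink :: "R4 \<Rightarrow> R4 \<Rightarrow> real" where
  "mink x y = - (x$0 * y$0) + x$1 * y$1 + x$2 * y$2 + x$3 * y$3"

definition H3 :: "R4 set" where
  "H3 = {p. mink p p = -1 \<and> p$0 > 0}"

definition UT :: "(TX) set" where
  "UT = {(p, v). p \<in> H3 \<and> mink v v = 1 \<and> mink p v = 0}"

definition gflow :: "real \<Rightarrow> TX \<Rightarrow> TX" where
  "gflow t x = (cosh t *\<^sub>R fst x + sinh t *\<^sub>R snd x, sinh t *\<^sub>R fst x + cosh t *\<^sub>R snd x)"

text \<open>Norm of a tangent vector (p',v') at (p,v) for the Sasaki metric: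
  |p'|^2 + |Dv|^2 where Dv is the covariant derivative, i.e. the projection of v'
  onto T_p H^3.\<close>
definition sasaki_norm :: "TX \<Rightarrow> TX \<Rightarrow> real" where
  "sasaki_norm x dx =
     (let p = fst x; p' = fst dx; v' = snd dx; Dv = v' + mink v' p *\<^sub>R p
      in sqrt (mink p' p' + mink Dv Dv))"

definition path_len :: "(real \<Rightarrow> TX) \<Rightarrow> real" where
  "path_len \<gamma> = integral {0..1} (\<lambda>s. sasaki_norm (\<gamma> s) (vector_derivative \<gamma> (at s)))"

definition path_dist :: "(TX) set \<Rightarrow> TX \<Rightarrow> TX \<Rightarrow> real" where
  "path_dist N x y = Inf (path_len ` {\<gamma>. \<gamma> piecewise_C1_differentiable_on {0..1}
       \<and> \<gamma> ` {0..1} \<subseteq> N \<and> \<gamma> 0 = x \<and> \<gamma> 1 = y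
       \<and> (\<lambda>s. sasaki_norm (\<gamma> s) (vector_derivative \<gamma> (at s))) integrable_on {0..1}})"

definition dX :: "TX \<Rightarrow> TX \<Rightarrow> real" where
  "dX = path_dist UT"

definition null_future :: "R4 \<Rightarrow> bool" where
  "null_future l \<longleftrightarrow> mink l l = 0 \<and> l$0 > 0"

definition material_view :: "R4 \<Rightarrow> (TX) set" where
  "material_view p0 = {x \<in> UT. fst x = p0}"

text \<open>Horosphere centred at the ideal point [l] (l future null) passing through p.\<close>
definition horosphere :: "R4 \<Rightarrow> R4 \<Rightarrow> R4 set" where
  "horosphere l p = {q \<in> H3. mink q l = mink p l}"

text \<open>Unit normal at q pointing towards the ideal point [l] (inward for horospheres centred at [l]).\<close>
definition normal_towards :: "R4 \<Rightarrow> R4 \<Rightarrow> R4" where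
  "normal_towards l q = (1 / (- mink q l)) *\<^sub>R l - q"

text \<open>Ideal view: outward unit normals to a horosphere centred at [l].\<close>
definition ideal_view :: "R4 \<Rightarrow> R4 \<Rightarrow> (TX) set" where
  "ideal_view l p = {(q, - normal_towards l q) | q. q \<in> horosphere l p}"

text \<open>Hyperideal view: the unit normals n to the geodesic plane n-perp (n spacelike unit),
  pointing to the side of n.\<close>
definition hyperideal_view :: "R4 \<Rightarrow> (TX) set" where
  "hyperideal_view n = {(q, n) | q. q \<in> H3 \<and> mink q n = 0}"

definition is_view :: "(TX) set \<Rightarrow> bool" where
  "is_view D \<longleftrightarrow>
     (\<exists>p0 \<in> H3. D = material_view p0)
   \<or> (\<exists>l p. null_future l \<and> p \<in> H3 \<and> D = ideal_view l p)
   \<or> (\<exists>n. mink n n = 1 \<and> D = hyperideal_view n)"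

text \<open>Future null vector representing the forward ideal endpoint of the ray of x.\<close>
definition endpoint :: "TX \<Rightarrow> R4" where
  "endpoint x = fst x + snd x"

text \<open>H^s(x_u): inward unit normals to the horosphere through pi(x_u) centred at the
  endpoint of the ray of x_u.\<close>
definition Hs :: "TX \<Rightarrow> (TX) set" where
  "Hs xu = {(q, normal_towards (endpoint xu) q) | q. q \<in> horosphere (endpoint xu) (fst xu)}"

definition Bs :: "real \<Rightarrow> TX \<Rightarrow> (TX) set" where
  "Bs \<epsilon> xu = {xs \<in> Hs xu. path_dist (Hs xu) xu xs \<le> \<epsilon>}"

definition coord :: "TX \<Rightarrow> real \<Rightarrow> TX \<Rightarrow> TX" where
  "coord xu xf xs = gflow xf xs"

definition D_eps :: "(TX) set \<Rightarrow> real
    \<Rightarrow> ((TX) \<times> real \<times> (TX)) set" where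
  "D_eps D \<epsilon> = {(xu, xf, xs). xu \<in> D \<and> xf \<in> {-\<epsilon><..<\<epsilon>} \<and> xs \<in> Bs \<epsilon> xu}"

end

(* A point of D_eps is gflow xf xs, where xs lies on the stable horosphere Hs xu and is joined to
   xu inside Hs xu by paths of length close to path_dist (Hs xu) xu xs <= eps.  In the hyperboloid
   model Hs xu consists of the pairs (q, l - q) with mink q l = -1, where l = endpoint xu, so its
   tangent vectors have the form (a, -a); the geodesic flow maps (a, -a) to exp (-t) (a, -a) and
   therefore shortens these paths by the factor exp (-t) <= 1.  Hence gflow t xs stays within eps
   of gflow t xu.  The point gflow t (gflow xf xs) = gflow xf (gflow t xs) is joined to gflow t xs
   by a flow line of length |xf| < eps, and the triangle inequality for dX gives 2 eps. *)

theory Submission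
  imports Defs
begin

section \<open>Piecewise C1 paths\<close>

lemma has_vector_derivative_locally_constant:
  assumes "(f has_vector_derivative f') (at s)" and "open S" and "s \<in> S"
    and "\<And>y. y \<in> S \<Longrightarrow> f y = c"
  shows "f' = 0"
proof -
  have "((\<lambda>_. c) has_vector_derivative f') (at s)"
    by (rule has_vector_derivative_transform_within_open[OF assms(1-3)]) (simp add: assms(4))
  then show ?thesis
    using has_vector_derivative_const vector_derivative_unique_at by blast
qed

lemma has_vector_derivative_fst:
  "(\<gamma> has_vector_derivative D) F \<Longrightarrow> ((\<lambda>y. fst (\<gamma> y)) has_vector_derivative fst D) F"
  by (rule bounded_linear.has_vector_derivative[OF bounded_linear_fst])

lemma has_vector_derivative_snd:
  "(\<gamma> has_vector_derivative D) F \<Longrightarrow> ((\<lambda>y. snd (\<gamma> y)) has_vector_derivative snd D) F"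
  by (rule bounded_linear.has_vector_derivative[OF bounded_linear_snd])

lemma piecewise_C1_has_vector_derivative_off_finite:
  assumes "\<gamma> piecewise_C1_differentiable_on {0..1}"
  obtains K where "finite K"
    and "\<And>s. s \<in> {0..1} - K \<Longrightarrow>
           s \<in> {0<..<1} \<and> (\<gamma> has_vector_derivative vector_derivative \<gamma> (at s)) (at s)"
proof -
  obtain K where K: "finite K" "\<gamma> C1_differentiable_on {0..1} - K"
    using assms by (auto simp: piecewise_C1_differentiable_on_def)
  show ?thesis
  proof (rule that[of "K \<union> {0, 1}"])
    show "finite (K \<union> {0, 1})" using K(1) by simp
  next
    fix s assume "s \<in> {0..1} - (K \<union> {0, 1})"
    then show "s \<in> {0<..<1} \<and> (\<gamma> has_vector_derivative vector_derivative \<gamma> (at s)) (at s)"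
      using K(2) by (auto simp: C1_differentiable_on_eq vector_derivative_works[symmetric])
  qed
qed

lemma piecewise_C1_differentiable_bounded_linear:
  assumes L: "bounded_linear L" and \<gamma>: "\<gamma> piecewise_C1_differentiable_on S"
  shows "(\<lambda>s. L (\<gamma> s)) piecewise_C1_differentiable_on S"
proof -
  obtain K D where K: "finite K" and cont: "continuous_on S \<gamma>"
    and D: "\<And>s. s \<in> S - K \<Longrightarrow> (\<gamma> has_vector_derivative D s) (at s)" "continuous_on (S - K) D"
    using \<gamma> by (auto simp: piecewise_C1_differentiable_on_def C1_differentiable_on_def)
  have "(\<lambda>s. L (\<gamma> s)) C1_differentiable_on S - K"
    unfolding C1_differentiable_on_def
  proof (intro exI[of _ "\<lambda>s. L (D s)"] conjI ballI)
    show "((\<lambda>s. L (\<gamma> s)) has_vector_derivative L (D s)) (at s)" if "s \<in> S - K" for s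
      using D(1)[OF that] by (rule bounded_linear.has_vector_derivative[OF L])
    show "continuous_on (S - K) (\<lambda>s. L (D s))"
      using D(2) by (rule bounded_linear.continuous_on[OF L])
  qed
  then show ?thesis
    using K bounded_linear.continuous_on[OF L cont]
    by (auto simp: piecewise_C1_differentiable_on_def)
qed

lemma vector_derivative_joinpaths_first:
  assumes "g1 differentiable at (2 * z)" and "z < 1/2"
  shows "vector_derivative (g1 +++ g2) (at z) = 2 *\<^sub>R vector_derivative g1 (at (2 * z))"
proof (rule vector_derivative_at[OF has_vector_derivative_transform_within])
  have "((\<lambda>x. 2 * x) has_vector_derivative 2) (at z)"
    by (auto intro!: derivative_eq_intros)
  then show "((\<lambda>x. g1 (2 * x)) has_vector_derivative 2 *\<^sub>R vector_derivative g1 (at (2 * z))) (at z)"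
    using vector_diff_chain_at[of "\<lambda>x. 2 * x", unfolded o_def] assms(1)
    by (simp add: vector_derivative_works)
  show "0 < \<bar>z - 1/2\<bar>" using assms(2) by simp
qed (use assms(2) in \<open>auto simp: joinpaths_def dist_real_def abs_if split: if_split_asm\<close>)

lemma vector_derivative_joinpaths_second:
  assumes "g2 differentiable at (2 * z - 1)" and "1/2 < z"
  shows "vector_derivative (g1 +++ g2) (at z) = 2 *\<^sub>R vector_derivative g2 (at (2 * z - 1))"
proof (rule vector_derivative_at[OF has_vector_derivative_transform_within])
  have "((\<lambda>x. 2 * x - 1) has_vector_derivative 2) (at z)"
    by (auto intro!: derivative_eq_intros)
  then show "((\<lambda>x. g2 (2 * x - 1)) has_vector_derivative 2 *\<^sub>R vector_derivative g2 (at (2 * z - 1))) (at z)"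
    using vector_diff_chain_at[of "\<lambda>x. 2 * x - 1", unfolded o_def] assms(1)
    by (simp add: vector_derivative_works)
  show "0 < \<bar>z - 1/2\<bar>" using assms(2) by simp
qed (use assms(2) in \<open>auto simp: joinpaths_def dist_real_def abs_if split: if_split_asm\<close>)

lemma has_integral_joinpaths:
  fixes F :: "'a::real_normed_vector \<Rightarrow> 'a \<Rightarrow> real"
  assumes hom: "\<And>x v. F x (2 *\<^sub>R v) = 2 * F x v"
    and "valid_path g1" and "valid_path g2"
    and I1: "((\<lambda>s. F (g1 s) (vector_derivative g1 (at s))) has_integral I1) {0..1}"
    and I2: "((\<lambda>s. F (g2 s) (vector_derivative g2 (at s))) has_integral I2) {0..1}"
  shows "((\<lambda>s. F ((g1 +++ g2) s) (vector_derivative (g1 +++ g2) (at s))) has_integral I1 + I2) {0..1}"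
proof -
  let ?F = "\<lambda>s. F ((g1 +++ g2) s) (vector_derivative (g1 +++ g2) (at s))"
  obtain K1 K2 where K1: "finite K1" "\<forall>x\<in>{0..1} - K1. g1 differentiable at x"
    and K2: "finite K2" "\<forall>x\<in>{0..1} - K2. g2 differentiable at x"
    using assms(2,3)
    by (auto simp: valid_path_def piecewise_C1_differentiable_on_def C1_differentiable_on_eq)
  have i1: "((\<lambda>x. 2 * F (g1 (2 * x)) (vector_derivative g1 (at (2 * x)))) has_integral I1) {0..1/2}"
    and i2: "((\<lambda>x. 2 * F (g2 (2 * x - 1)) (vector_derivative g2 (at (2 * x - 1)))) has_integral I2)
      {1/2..1}"
    using has_integral_affinity01[OF I1, where m=2 and c=0, THEN has_integral_cmul[where c=2]]
      has_integral_affinity01[OF I2, where m=2 and c="-1", THEN has_integral_cmul[where c=2]]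
    by (simp_all only: image_affinity_atLeastAtMost_div_diff, simp_all add: mult_ac)
  have "(?F has_integral I1) {0..1/2}"
  proof (rule has_integral_spike_finite[OF _ _ i1])
    show "finite (insert (1/2) ((\<lambda>x. 2 * x) -` K1))"
      using K1(1) by (force intro: finite_vimageI inj_onI)
    fix x assume x: "x \<in> {0..1/2} - insert (1/2) ((\<lambda>x. 2 * x) -` K1)"
    then have "vector_derivative (g1 +++ g2) (at x) = 2 *\<^sub>R vector_derivative g1 (at (2 * x))"
      using K1(2) by (intro vector_derivative_joinpaths_first) auto
    then show "?F x = 2 * F (g1 (2 * x)) (vector_derivative g1 (at (2 * x)))"
      using x by (simp add: hom joinpaths_def mult.commute)
  qed
  moreover have "(?F has_integral I2) {1/2..1}"
  proof (rule has_integral_spike_finite[OF _ _ i2])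
    show "finite (insert (1/2) ((\<lambda>x. 2 * x - 1) -` K2))"
      using K2(1) by (force intro: finite_vimageI inj_onI)
    fix x assume x: "x \<in> {1/2..1} - insert (1/2) ((\<lambda>x. 2 * x - 1) -` K2)"
    then have "vector_derivative (g1 +++ g2) (at x) = 2 *\<^sub>R vector_derivative g2 (at (2 * x - 1))"
      using K2(2) by (intro vector_derivative_joinpaths_second) auto
    then show "?F x = 2 * F (g2 (2 * x - 1)) (vector_derivative g2 (at (2 * x - 1)))"
      using x by (simp add: hom joinpaths_def mult.commute)
  qed
  ultimately show ?thesis
    by (simp add: has_integral_combine[where c="1/2"])
qed


section \<open>Minkowski space\<close>

lemma mink_sym: "mink x y = mink y x"
  by (simp add: mink_def algebra_simps)

lemma mink_bilinear [simp]:
  "mink (x + y) z = mink x z + mink y z" "mink z (x + y) = mink z x + mink z y"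
  "mink (x - y) z = mink x z - mink y z" "mink z (x - y) = mink z x - mink z y"
  "mink (- x) z = - mink x z" "mink z (- x) = - mink z x"
  "mink (c *\<^sub>R x) z = c * mink x z" "mink z (c *\<^sub>R x) = c * mink z x"
  "mink 0 z = 0" "mink z 0 = 0"
  by (simp_all add: mink_def algebra_simps)

lemma bounded_bilinear_mink: "bounded_bilinear mink"
proof
  show "\<exists>K. \<forall>a b. norm (mink a b) \<le> norm a * norm b * K"
  proof (intro exI allI)
    fix a b :: R4
    have c: "\<And>i j. \<bar>a$i * b$j\<bar> \<le> norm a * norm b"
      by (simp add: abs_mult mult_mono component_le_norm_cart)
    have "norm (mink a b) \<le> \<bar>a$0 * b$0\<bar> + \<bar>a$1 * b$1\<bar> + \<bar>a$2 * b$2\<bar> + \<bar>a$3 * b$3\<bar>"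
      by (simp add: mink_def)
    also have "\<dots> \<le> norm a * norm b * 4"
      using c[of 0 0] c[of 1 1] c[of 2 2] c[of 3 3] by linarith
    finally show "norm (mink a b) \<le> norm a * norm b * 4" .
  qed
qed (simp_all add: mink_def algebra_simps)

lemma has_vector_derivative_mink:
  assumes "(f has_vector_derivative f') (at s)" and "(g has_vector_derivative g') (at s)"
  shows "((\<lambda>y. mink (f y) (g y)) has_vector_derivative mink (f s) g' + mink f' (g s)) (at s)"
  by (rule bounded_bilinear.has_vector_derivative[OF bounded_bilinear_mink assms])

definition spatial_inner :: "R4 \<Rightarrow> R4 \<Rightarrow> real" where
  "spatial_inner x y = x$1 * y$1 + x$2 * y$2 + x$3 * y$3"

lemma mink_eq_spatial_inner: "mink x y = spatial_inner x y - x$0 * y$0"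
  by (simp add: mink_def spatial_inner_def)

lemma spatial_inner_self_nonneg: "0 \<le> spatial_inner x x"
  by (simp add: spatial_inner_def)

lemma spatial_inner_cauchy_schwarz:
  "(spatial_inner x y)\<^sup>2 \<le> spatial_inner x x * spatial_inner y y"
proof -
  have "spatial_inner x x * spatial_inner y y - (spatial_inner x y)\<^sup>2
      = (x$1 * y$2 - x$2 * y$1)\<^sup>2 + (x$1 * y$3 - x$3 * y$1)\<^sup>2 + (x$2 * y$3 - x$3 * y$2)\<^sup>2"
    by (simp add: spatial_inner_def power2_eq_square algebra_simps)
  also have "\<dots> \<ge> 0" by simp
  finally show ?thesis by simp
qed

lemma mink_orthogonal_timelike_imp_spacelike:
  assumes "mink q q = -1" and "mink a q = 0"
  shows "0 \<le> mink a a"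
proof -
  let ?A = "spatial_inner a a"
  have aq: "spatial_inner a q = a$0 * q$0" and qq: "spatial_inner q q = (q$0)\<^sup>2 - 1"
    using assms by (simp_all add: mink_eq_spatial_inner power2_eq_square)
  have "(a$0 * q$0)\<^sup>2 \<le> ?A * ((q$0)\<^sup>2 - 1)"
    using spatial_inner_cauchy_schwarz[of a q] unfolding aq qq .
  then have "(a$0)\<^sup>2 * (q$0)\<^sup>2 \<le> ?A * (q$0)\<^sup>2"
    using spatial_inner_self_nonneg[of a] by (simp add: algebra_simps)
  moreover have "(q$0)\<^sup>2 > 0"
    using qq spatial_inner_self_nonneg[of q] by linarith
  ultimately have "(a$0)\<^sup>2 \<le> ?A" by simp
  then show ?thesis by (simp add: mink_eq_spatial_inner power2_eq_square)
qed

lemma mink_null_future_neg_iff: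
  assumes "mink q q = -1" and "null_future l"
  shows "mink q l < 0 \<longleftrightarrow> 0 < q$0"
proof -
  have l: "spatial_inner l l = (l$0)\<^sup>2" "l$0 > 0"
    using assms(2) by (simp_all add: null_future_def mink_eq_spatial_inner power2_eq_square)
  have qq: "spatial_inner q q = (q$0)\<^sup>2 - 1"
    using assms(1) by (simp add: mink_eq_spatial_inner power2_eq_square)
  have "(spatial_inner q l)\<^sup>2 \<le> ((q$0)\<^sup>2 - 1) * (l$0)\<^sup>2"
    using spatial_inner_cauchy_schwarz[of q l] unfolding qq l(1) .
  also have "\<dots> < (q$0 * l$0)\<^sup>2"
    using l(2) by (simp add: algebra_simps)
  finally have "\<bar>spatial_inner q l\<bar> < \<bar>q$0 * l$0\<bar>"
    by (simp add: abs_le_square_iff[symmetric] not_le[symmetric])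
  moreover have "0 < q$0 \<longleftrightarrow> 0 < q$0 * l$0"
    using l(2) by (simp add: zero_less_mult_iff)
  ultimately show ?thesis
    by (auto simp: mink_eq_spatial_inner abs_less_iff abs_if split: if_splits)
qed

lemma H3_mink_null_future_neg: "q \<in> H3 \<Longrightarrow> null_future l \<Longrightarrow> mink q l < 0"
  using mink_null_future_neg_iff by (simp add: H3_def)


section \<open>The unit tangent bundle and the geodesic flow\<close>

lemma mem_UT_iff: "(p, v) \<in> UT \<longleftrightarrow> p \<in> H3 \<and> mink v v = 1 \<and> mink p v = 0"
  by (simp add: UT_def)

lemma UT_mink_fst_self: "x \<in> UT \<Longrightarrow> mink (fst x) (fst x) = -1"
  by (auto simp: UT_def H3_def)

lemma endpoint_null_future:
  assumes "x \<in> UT"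
  shows "null_future (endpoint x)"
proof -
  obtain p v where x: "x = (p, v)" by (cases x)
  have p: "mink p p = -1" "p$0 > 0" and v: "mink v v = 1" "mink p v = 0"
    using assms by (auto simp: x UT_def H3_def)
  have pv: "spatial_inner p v = p$0 * v$0" and pp: "spatial_inner p p = (p$0)\<^sup>2 - 1"
    and vv: "spatial_inner v v = (v$0)\<^sup>2 + 1"
    using p v by (simp_all add: mink_eq_spatial_inner power2_eq_square)
  have "(p$0 * v$0)\<^sup>2 \<le> ((p$0)\<^sup>2 - 1) * ((v$0)\<^sup>2 + 1)"
    using spatial_inner_cauchy_schwarz[of p v] unfolding pv pp vv .
  then have "(v$0)\<^sup>2 < (p$0)\<^sup>2" by (simp add: algebra_simps)
  then have "\<bar>v$0\<bar> < p$0"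
    using p(2) by (simp add: abs_le_square_iff[symmetric] not_le[symmetric])
  moreover have "mink (p + v) (p + v) = 0"
    using p v by (simp add: mink_sym[of v p])
  ultimately show ?thesis by (simp add: x endpoint_def null_future_def)
qed

lemma view_subset_UT:
  assumes "is_view D"
  shows "D \<subseteq> UT"
proof -
  have "(q, - normal_towards l q) \<in> UT" if "null_future l" "q \<in> H3" for l q
  proof -
    have "mink q l < 0" by (rule H3_mink_null_future_neg[OF that(2,1)])
    moreover have "mink l l = 0" "mink q q = -1"
      using that by (auto simp: null_future_def H3_def)
    ultimately show ?thesis
      using that(2) by (simp add: mem_UT_iff normal_towards_def mink_sym[of l q] field_simps)
  qed
  then show ?thesis
    using assms unfolding is_view_def
    by (auto simp: material_view_def ideal_view_def horosphere_def hyperideal_view_def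
        UT_def mink_sym)
qed

lemma gflow_zero [simp]: "gflow 0 x = x"
  by (simp add: gflow_def)

lemma gflow_add: "gflow a (gflow b x) = gflow (a + b) x"
  by (simp add: gflow_def cosh_add sinh_add algebra_simps)

lemma gflow_in_UT:
  assumes "x \<in> UT"
  shows "gflow \<tau> x \<in> UT"
proof -
  obtain p v where x: "x = (p, v)" by (cases x)
  have p: "mink p p = -1" and v: "mink v v = 1" "mink p v = 0" "mink v p = 0"
    using assms by (auto simp: x UT_def H3_def mink_sym[of v p])
  have ch: "(cosh \<tau>)\<^sup>2 = (sinh \<tau>)\<^sup>2 + 1" by (rule cosh_square_eq)
  let ?P = "cosh \<tau> *\<^sub>R p + sinh \<tau> *\<^sub>R v" and ?V = "sinh \<tau> *\<^sub>R p + cosh \<tau> *\<^sub>R v"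
  have PP: "mink ?P ?P = -1" and VV: "mink ?V ?V = 1" and PV: "mink ?P ?V = 0"
    using p v ch by (simp_all add: algebra_simps power2_eq_square)
  have "mink ?P (endpoint x) = sinh \<tau> - cosh \<tau>"
    using p v by (simp add: x endpoint_def)
  also have "\<dots> < 0" by (simp add: sinh_less_cosh_real)
  finally have "0 < ?P$0"
    using mink_null_future_neg_iff[OF PP endpoint_null_future[OF assms]] by simp
  then show ?thesis using PP VV PV p v by (simp add: x gflow_def UT_def H3_def)
qed

lemma bounded_linear_gflow: "bounded_linear (gflow t)"
  unfolding gflow_def by (auto intro!: bounded_linear_intros)

lemma gflow_orbit_has_vector_derivative:
  "((\<lambda>s. gflow (s * \<tau>) x) has_vector_derivative \<tau> *\<^sub>R prod.swap (gflow (s * \<tau>) x)) (at s)"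
  unfolding gflow_def by (auto intro!: derivative_eq_intros simp: algebra_simps)

lemma UT_path_derivative_orthogonal:
  assumes "\<gamma> ` {0..1} \<subseteq> UT" and "s \<in> {0<..<1}" and "(\<gamma> has_vector_derivative D) (at s)"
  shows "mink (fst D) (fst (\<gamma> s)) = 0"
proof -
  have "mink (fst (\<gamma> s)) (fst D) + mink (fst D) (fst (\<gamma> s)) = 0"
  proof (rule has_vector_derivative_locally_constant)
    show "((\<lambda>y. mink (fst (\<gamma> y)) (fst (\<gamma> y))) has_vector_derivative
        mink (fst (\<gamma> s)) (fst D) + mink (fst D) (fst (\<gamma> s))) (at s)"
      by (intro has_vector_derivative_mink has_vector_derivative_fst assms(3))
    fix y :: real assume "y \<in> {0<..<1}"
    then show "mink (fst (\<gamma> y)) (fst (\<gamma> y)) = -1"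
      using assms(1) by (intro UT_mink_fst_self) auto
  qed (use assms(2) in auto)
  then show ?thesis by (simp add: mink_sym[of "fst (\<gamma> s)"])
qed


section \<open>The Sasaki path metric\<close>

lemma sasaki_norm_scaleR: "sasaki_norm x (c *\<^sub>R dx) = \<bar>c\<bar> * sasaki_norm x dx"
proof -
  obtain p v a b where x: "x = (p, v)" and dx: "dx = (a, b)" by (cases x, cases dx)
  let ?Dv = "b + mink b p *\<^sub>R p"
  have "sasaki_norm x (c *\<^sub>R dx) = sqrt (c\<^sup>2 * (mink a a + mink ?Dv ?Dv))"
    by (simp add: x dx sasaki_norm_def algebra_simps power2_eq_square)
  also have "\<dots> = \<bar>c\<bar> * sasaki_norm x dx"
    by (simp add: x dx sasaki_norm_def real_sqrt_mult)
  finally show ?thesis .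
qed

lemma sasaki_norm_nonneg:
  assumes "mink p p = -1" and "mink a p = 0"
  shows "0 \<le> sasaki_norm (p, v) (a, b)"
proof -
  let ?Dv = "b + mink b p *\<^sub>R p"
  have "0 \<le> mink ?Dv ?Dv"
    by (rule mink_orthogonal_timelike_imp_spacelike[OF assms(1)]) (simp add: assms(1))
  moreover have "0 \<le> mink a a"
    by (rule mink_orthogonal_timelike_imp_spacelike[OF assms])
  ultimately show ?thesis by (simp add: sasaki_norm_def)
qed

lemma continuous_on_sasaki_norm:
  assumes "continuous_on S f" and "continuous_on S g"
  shows "continuous_on S (\<lambda>s. sasaki_norm (f s) (g s))"
  unfolding sasaki_norm_def Let_def
  by (intro continuous_intros bounded_bilinear.continuous_on[OF bounded_bilinear_mink] assms)

lemma sasaki_norm_scaleR_swap: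
  assumes "x \<in> UT"
  shows "sasaki_norm x (c *\<^sub>R prod.swap x) = \<bar>c\<bar>"
  using assms by (cases x) (simp add: sasaki_norm_def UT_def H3_def)

definition admissible_paths :: "TX set \<Rightarrow> TX \<Rightarrow> TX \<Rightarrow> (real \<Rightarrow> TX) set" where
  "admissible_paths N x y = {\<gamma>. \<gamma> piecewise_C1_differentiable_on {0..1}
       \<and> \<gamma> ` {0..1} \<subseteq> N \<and> \<gamma> 0 = x \<and> \<gamma> 1 = y
       \<and> (\<lambda>s. sasaki_norm (\<gamma> s) (vector_derivative \<gamma> (at s))) integrable_on {0..1}}"

lemma path_dist_eq_Inf: "path_dist N x y = Inf (path_len ` admissible_paths N x y)"
  unfolding path_dist_def admissible_paths_def ..

(* sqrt (- x) = - sqrt x in HOL, so the integrand is nonnegative only because curves in UT have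
   spacelike tangent vectors. *)
lemma path_len_nonneg:
  assumes "\<gamma> \<in> admissible_paths N x y" and "N \<subseteq> UT"
  shows "0 \<le> path_len \<gamma>"
proof -
  let ?f = "\<lambda>s. sasaki_norm (\<gamma> s) (vector_derivative \<gamma> (at s))"
  have im: "\<gamma> ` {0..1} \<subseteq> UT" and int: "?f integrable_on {0..1}"
    and "\<gamma> piecewise_C1_differentiable_on {0..1}"
    using assms by (auto simp: admissible_paths_def)
  then obtain K where K: "finite K" "\<And>s. s \<in> {0..1} - K \<Longrightarrow>
      s \<in> {0<..<1} \<and> (\<gamma> has_vector_derivative vector_derivative \<gamma> (at s)) (at s)"
    using piecewise_C1_has_vector_derivative_off_finite by blast
  have nonneg: "0 \<le> ?f s" if "s \<in> {0..1} - K" for s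
  proof -
    have "mink (fst (vector_derivative \<gamma> (at s))) (fst (\<gamma> s)) = 0"
      using UT_path_derivative_orthogonal[OF im] K(2)[OF that] by blast
    moreover have "mink (fst (\<gamma> s)) (fst (\<gamma> s)) = -1"
      using im that by (intro UT_mink_fst_self) auto
    ultimately show ?thesis
      using sasaki_norm_nonneg by (metis prod.collapse)
  qed
  have "path_len \<gamma> = integral {0..1} (\<lambda>s. \<bar>?f s\<bar>)"
    unfolding path_len_def by (rule integral_spike[of K]) (use K(1) nonneg in auto)
  also have "\<dots> \<ge> 0"
    by (rule integral_nonneg) (auto intro!: integrable_spike_finite[OF K(1) _ int] simp: nonneg)
  finally show ?thesis .
qed

lemma path_dist_le_path_len:
  assumes "\<gamma> \<in> admissible_paths N x y" and "N \<subseteq> UT"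
  shows "path_dist N x y \<le> path_len \<gamma>"
  unfolding path_dist_eq_Inf
  by (rule cInf_lower) (use assms in \<open>auto intro: bdd_belowI[of _ 0] path_len_nonneg\<close>)

lemma admissible_paths_joinpaths:
  assumes \<gamma>1: "\<gamma>1 \<in> admissible_paths N x y" and \<gamma>2: "\<gamma>2 \<in> admissible_paths N y z"
  shows "\<gamma>1 +++ \<gamma>2 \<in> admissible_paths N x z"
    and "path_len (\<gamma>1 +++ \<gamma>2) = path_len \<gamma>1 + path_len \<gamma>2"
proof -
  have valid: "valid_path \<gamma>1" "valid_path \<gamma>2"
    using assms by (simp_all add: admissible_paths_def valid_path_def)
  have len: "((\<lambda>s. sasaki_norm ((\<gamma>1 +++ \<gamma>2) s) (vector_derivative (\<gamma>1 +++ \<gamma>2) (at s)))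
      has_integral path_len \<gamma>1 + path_len \<gamma>2) {0..1}"
    using assms unfolding admissible_paths_def path_len_def
    by (intro has_integral_joinpaths valid integrable_integral) (auto simp: sasaki_norm_scaleR)
  moreover have "path_image (\<gamma>1 +++ \<gamma>2) \<subseteq> N"
    using path_image_join_subset[of \<gamma>1 \<gamma>2] assms
    by (auto simp: admissible_paths_def path_image_def)
  moreover have "valid_path (\<gamma>1 +++ \<gamma>2)"
    using assms by (intro valid_path_join valid) (simp add: admissible_paths_def pathstart_def pathfinish_def)
  moreover have "(\<gamma>1 +++ \<gamma>2) 0 = x" and "(\<gamma>1 +++ \<gamma>2) 1 = z"
    using assms by (simp_all add: admissible_paths_def joinpaths_def)
  ultimately show "\<gamma>1 +++ \<gamma>2 \<in> admissible_paths N x z"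
    by (simp add: admissible_paths_def valid_path_def path_image_def has_integral_integrable)
  show "path_len (\<gamma>1 +++ \<gamma>2) = path_len \<gamma>1 + path_len \<gamma>2"
    unfolding path_len_def[of "\<gamma>1 +++ \<gamma>2"] using len by (rule integral_unique)
qed

(* The nonemptiness hypotheses are needed: Inf {} is unspecified on the reals. *)
lemma path_dist_triangle:
  assumes "N \<subseteq> UT" and "admissible_paths N x y \<noteq> {}" and "admissible_paths N y z \<noteq> {}"
  shows "path_dist N x z \<le> path_dist N x y + path_dist N y z"
proof -
  have "path_dist N x z - path_dist N x y \<le> path_len \<gamma>2"
    if \<gamma>2: "\<gamma>2 \<in> admissible_paths N y z" for \<gamma>2
  proof -
    have "path_dist N x z - path_len \<gamma>2 \<le> path_dist N x y"
      unfolding path_dist_eq_Inf[of N x y]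
    proof (rule cInf_greatest)
      fix L assume "L \<in> path_len ` admissible_paths N x y"
      then obtain \<gamma>1 where \<gamma>1: "\<gamma>1 \<in> admissible_paths N x y" and L: "L = path_len \<gamma>1" by blast
      show "path_dist N x z - path_len \<gamma>2 \<le> L"
        using path_dist_le_path_len[OF admissible_paths_joinpaths(1)[OF \<gamma>1 \<gamma>2] assms(1)]
        unfolding admissible_paths_joinpaths(2)[OF \<gamma>1 \<gamma>2] L by simp
    qed (use assms(2) in simp)
    then show ?thesis by simp
  qed
  then have "path_dist N x z - path_dist N x y \<le> path_dist N y z"
    unfolding path_dist_eq_Inf[of N y z] using assms(3) by (intro cInf_greatest) auto
  then show ?thesis by simp
qed

lemma gflow_orbit_admissible:
  assumes "x \<in> UT"
  shows "(\<lambda>s. gflow (s * \<tau>) x) \<in> admissible_paths UT x (gflow \<tau> x)"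
    and "path_len (\<lambda>s. gflow (s * \<tau>) x) = \<bar>\<tau>\<bar>"
proof -
  have speed: "sasaki_norm (gflow (s * \<tau>) x) (vector_derivative (\<lambda>s. gflow (s * \<tau>) x) (at s)) = \<bar>\<tau>\<bar>"
    for s
    using vector_derivative_at[OF gflow_orbit_has_vector_derivative]
      sasaki_norm_scaleR_swap[OF gflow_in_UT[OF assms]] by simp
  have "continuous_on {0..1} (\<lambda>s. \<tau> *\<^sub>R prod.swap (gflow (s * \<tau>) x))"
    unfolding gflow_def by (simp add: case_prod_unfold) (intro continuous_intros)
  then have "(\<lambda>s. gflow (s * \<tau>) x) C1_differentiable_on {0..1}"
    unfolding C1_differentiable_on_def
    by (intro exI[of _ "\<lambda>s. \<tau> *\<^sub>R prod.swap (gflow (s * \<tau>) x)"] conjI ballI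
        gflow_orbit_has_vector_derivative)
  then show "(\<lambda>s. gflow (s * \<tau>) x) \<in> admissible_paths UT x (gflow \<tau> x)"
    using assms gflow_in_UT[OF assms]
    by (auto simp: admissible_paths_def speed C1_differentiable_imp_piecewise)
  show "path_len (\<lambda>s. gflow (s * \<tau>) x) = \<bar>\<tau>\<bar>"
    by (simp add: path_len_def speed)
qed

lemma dX_gflow_le:
  assumes "x \<in> UT"
  shows "dX x (gflow \<tau> x) \<le> \<bar>\<tau>\<bar>"
  using path_dist_le_path_len[OF gflow_orbit_admissible(1)[OF assms]]
  by (simp add: dX_def gflow_orbit_admissible(2)[OF assms])


section \<open>Stable horospheres\<close>

lemma Hs_eq:
  assumes "xu \<in> UT"
  shows "Hs xu = {(q, endpoint xu - q) | q. q \<in> H3 \<and> mink q (endpoint xu) = -1}"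
proof -
  have "mink (fst xu) (endpoint xu) = -1"
    using assms by (cases xu) (simp add: UT_def H3_def endpoint_def)
  then show ?thesis
    by (auto simp: Hs_def horosphere_def normal_towards_def)
qed

lemma Hs_subset_UT:
  assumes "xu \<in> UT"
  shows "Hs xu \<subseteq> UT"
proof
  fix x assume "x \<in> Hs xu"
  then obtain q where x: "x = (q, endpoint xu - q)" and q: "q \<in> H3" "mink q (endpoint xu) = -1"
    using Hs_eq[OF assms] by blast
  have "mink (endpoint xu) (endpoint xu) = 0"
    using endpoint_null_future[OF assms] by (simp add: null_future_def)
  then show "x \<in> UT"
    using q by (simp add: x mem_UT_iff H3_def mink_sym[of "endpoint xu" q])
qed

lemma Hs_path_derivative:
  assumes "xu \<in> UT" and "\<gamma> ` {0..1} \<subseteq> Hs xu" and "s \<in> {0<..<1}"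
    and "(\<gamma> has_vector_derivative D) (at s)"
  shows "snd D = - fst D" and "mink (fst D) (endpoint xu) = 0"
proof -
  have on_Hs: "snd (\<gamma> y) + fst (\<gamma> y) = endpoint xu \<and> mink (fst (\<gamma> y)) (endpoint xu) = -1"
    if "y \<in> {0<..<1}" for y
  proof -
    have "\<gamma> y \<in> Hs xu" using assms(2) that by auto
    then show ?thesis using Hs_eq[OF assms(1)] by auto
  qed
  have "snd D + fst D = 0"
  proof (rule has_vector_derivative_locally_constant[where S="{0<..<1}"])
    show "((\<lambda>y. snd (\<gamma> y) + fst (\<gamma> y)) has_vector_derivative snd D + fst D) (at s)"
      by (intro has_vector_derivative_add has_vector_derivative_fst has_vector_derivative_snd assms(4))
  qed (use assms(3) on_Hs in auto)
  then show "snd D = - fst D" by (simp add: eq_neg_iff_add_eq_0)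
  have "mink (fst (\<gamma> s)) 0 + mink (fst D) (endpoint xu) = 0"
  proof (rule has_vector_derivative_locally_constant[where S="{0<..<1}"])
    show "((\<lambda>y. mink (fst (\<gamma> y)) (endpoint xu)) has_vector_derivative
        mink (fst (\<gamma> s)) 0 + mink (fst D) (endpoint xu)) (at s)"
      by (intro has_vector_derivative_mink has_vector_derivative_fst has_vector_derivative_const assms(4))
  qed (use assms(3) on_Hs in auto)
  then show "mink (fst D) (endpoint xu) = 0" by simp
qed

(* The chord from p to q, pushed along the null direction l just enough to stay on the
   hyperboloid; since mink l l = 0 and mink (q - p) l = 0, it stays on the horosphere too. *)
definition horo_segment :: "R4 \<Rightarrow> R4 \<Rightarrow> R4 \<Rightarrow> real \<Rightarrow> R4" where
  "horo_segment l p q s = p + s *\<^sub>R (q - p) + (s * (1 - s) * (1 + mink p q)) *\<^sub>R l"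

lemma horo_segment_mink:
  assumes "mink p p = -1" and "mink q q = -1" and "mink l l = 0"
    and "mink p l = -1" and "mink q l = -1"
  shows "mink (horo_segment l p q s) (horo_segment l p q s) = -1"
    and "mink (horo_segment l p q s) l = -1"
proof -
  have "mink l p = -1" "mink l q = -1" "mink q p = mink p q"
    using assms by (simp_all add: mink_sym)
  then show "mink (horo_segment l p q s) (horo_segment l p q s) = -1"
    and "mink (horo_segment l p q s) l = -1"
    using assms by (simp_all add: horo_segment_def algebra_simps power2_eq_square)
qed

lemma horo_segment_has_vector_derivative:
  "(horo_segment l p q has_vector_derivative (q - p) + ((1 - 2 * s) * (1 + mink p q)) *\<^sub>R l) (at s)"
  unfolding horo_segment_def[abs_def]
  by (auto intro!: derivative_eq_intros simp: algebra_simps)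

lemma Hs_admissible_paths_nonempty:
  assumes "xu \<in> UT" and "xs \<in> Hs xu"
  shows "admissible_paths (Hs xu) xu xs \<noteq> {}"
proof -
  define l where "l = endpoint xu"
  obtain p v where xu: "xu = (p, v)" by (cases xu)
  obtain q where xs: "xs = (q, l - q)" and q: "q \<in> H3" "mink q l = -1"
    using assms Hs_eq l_def by blast
  have l: "null_future l" "mink l l = 0"
    using endpoint_null_future[OF assms(1)] by (simp_all add: l_def null_future_def)
  have p: "mink p p = -1" "mink p l = -1" "p \<in> H3"
    using assms(1) by (auto simp: xu l_def endpoint_def UT_def H3_def)
  define Q where "Q = horo_segment l p q"
  define A where "A s = (q - p) + ((1 - 2 * s) * (1 + mink p q)) *\<^sub>R l" for s
  have Q: "mink (Q s) (Q s) = -1" "mink (Q s) l = -1" for s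
    using horo_segment_mink p q l by (auto simp: Q_def H3_def)
  have "Q s \<in> H3" for s
    using mink_null_future_neg_iff[OF Q(1) l(1)] Q by (simp add: H3_def)
  then have "(Q s, l - Q s) \<in> Hs xu" for s
    using Hs_eq[OF assms(1)] Q(2) by (auto simp: l_def)
  moreover have deriv: "((\<lambda>s. (Q s, l - Q s)) has_vector_derivative (A s, - A s)) (at s)" for s
    using has_vector_derivative_Pair[OF _ has_vector_derivative_diff[OF has_vector_derivative_const]]
      horo_segment_has_vector_derivative
    by (fastforce simp: Q_def A_def)
  have cont: "continuous_on {0..1} Q" "continuous_on {0..1} A"
    unfolding Q_def horo_segment_def[abs_def] A_def by (intro continuous_intros)+
  then have "continuous_on {0..1} (\<lambda>s. (A s, - A s))"
    by (intro continuous_intros)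
  then have "(\<lambda>s. (Q s, l - Q s)) C1_differentiable_on {0..1}"
    unfolding C1_differentiable_on_def
    by (intro exI[of _ "\<lambda>s. (A s, - A s)"] conjI ballI deriv)
  moreover have "continuous_on {0..1}
      (\<lambda>s. sasaki_norm (Q s, l - Q s) (vector_derivative (\<lambda>s. (Q s, l - Q s)) (at s)))"
    unfolding vector_derivative_at[OF deriv]
    by (intro continuous_on_sasaki_norm continuous_intros cont)
  moreover have "Q 0 = p" "Q 1 = q" "l - p = v"
    by (simp_all add: Q_def horo_segment_def l_def xu endpoint_def)
  ultimately have "(\<lambda>s. (Q s, l - Q s)) \<in> admissible_paths (Hs xu) xu xs"
    by (auto simp: admissible_paths_def xu xs C1_differentiable_imp_piecewise
        intro: integrable_continuous_interval)
  then show ?thesis by blast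
qed

lemma sasaki_norm_gflow_stable:
  assumes "mink q q = -1" and "mink q l = -1" and "mink l l = 0"
    and "mink a q = 0" and "mink a l = 0"
  shows "sasaki_norm (gflow t (q, l - q)) (gflow t (a, -a)) = exp (-t) * sasaki_norm (q, l - q) (a, -a)"
proof -
  have flow_a: "gflow t (a, -a) = (exp (-t) *\<^sub>R a, - (exp (-t) *\<^sub>R a))"
    by (simp add: gflow_def cosh_minus_sinh[symmetric] algebra_simps)
  have "sasaki_norm (gflow t (q, l - q)) (gflow t (a, -a)) = sqrt ((exp (-t))\<^sup>2 * (2 * mink a a))"
    using assms unfolding flow_a
    by (simp add: sasaki_norm_def gflow_def mink_sym[of q a] mink_sym[of l a] power2_eq_square
        algebra_simps)
  also have "\<dots> = exp (-t) * sqrt (2 * mink a a)"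
    by (simp add: real_sqrt_mult)
  also have "sqrt (2 * mink a a) = sasaki_norm (q, l - q) (a, -a)"
    using assms by (simp add: sasaki_norm_def mink_sym[of q a] mink_sym[of l a])
  finally show ?thesis .
qed

lemma sasaki_norm_gflow_Hs_derivative:
  assumes "xu \<in> UT" and "\<gamma> ` {0..1} \<subseteq> Hs xu" and "s \<in> {0<..<1}"
    and "(\<gamma> has_vector_derivative D) (at s)"
  shows "sasaki_norm (gflow t (\<gamma> s)) (gflow t D) = exp (-t) * sasaki_norm (\<gamma> s) D"
proof -
  define l where "l = endpoint xu"
  have "\<gamma> s \<in> Hs xu" using assms(2,3) by auto
  then obtain q where \<gamma>s: "\<gamma> s = (q, l - q)" and q: "mink q q = -1" "mink q l = -1"
    using Hs_eq[OF assms(1)] by (auto simp: l_def H3_def)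
  have D: "D = (fst D, - fst D)" and "mink (fst D) l = 0"
    using Hs_path_derivative[OF assms] by (auto simp: l_def prod_eq_iff)
  moreover have "mink (fst D) q = 0"
    using UT_path_derivative_orthogonal[OF _ assms(3,4)] assms(2) Hs_subset_UT[OF assms(1)] \<gamma>s
    by fastforce
  moreover have "mink l l = 0"
    using endpoint_null_future[OF assms(1)] by (simp add: l_def null_future_def)
  ultimately show ?thesis
    unfolding \<gamma>s by (subst (1 2) D) (rule sasaki_norm_gflow_stable[OF q])
qed

lemma gflow_Hs_path:
  assumes "xu \<in> UT" and \<gamma>: "\<gamma> \<in> admissible_paths (Hs xu) xu xs"
  shows "(\<lambda>s. gflow t (\<gamma> s)) \<in> admissible_paths UT (gflow t xu) (gflow t xs)"
    and "path_len (\<lambda>s. gflow t (\<gamma> s)) = exp (-t) * path_len \<gamma>"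
proof -
  have pc: "\<gamma> piecewise_C1_differentiable_on {0..1}" and im: "\<gamma> ` {0..1} \<subseteq> Hs xu"
    and int: "((\<lambda>s. sasaki_norm (\<gamma> s) (vector_derivative \<gamma> (at s))) has_integral path_len \<gamma>) {0..1}"
    using \<gamma> by (auto simp: admissible_paths_def path_len_def)
  obtain K where K: "finite K" "\<And>s. s \<in> {0..1} - K \<Longrightarrow>
      s \<in> {0<..<1} \<and> (\<gamma> has_vector_derivative vector_derivative \<gamma> (at s)) (at s)"
    using piecewise_C1_has_vector_derivative_off_finite[OF pc] by blast
  have "sasaki_norm (gflow t (\<gamma> s)) (vector_derivative (\<lambda>s. gflow t (\<gamma> s)) (at s))
      = exp (-t) * sasaki_norm (\<gamma> s) (vector_derivative \<gamma> (at s))" if "s \<in> {0..1} - K" for s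
  proof -
    have s: "s \<in> {0<..<1}" and d: "(\<gamma> has_vector_derivative vector_derivative \<gamma> (at s)) (at s)"
      using K(2)[OF that] by auto
    have "vector_derivative (\<lambda>s. gflow t (\<gamma> s)) (at s) = gflow t (vector_derivative \<gamma> (at s))"
      by (rule vector_derivative_at[OF bounded_linear.has_vector_derivative[OF bounded_linear_gflow d]])
    then show ?thesis
      using sasaki_norm_gflow_Hs_derivative[OF assms(1) im s d] by simp
  qed
  then have len: "((\<lambda>s. sasaki_norm (gflow t (\<gamma> s)) (vector_derivative (\<lambda>s. gflow t (\<gamma> s)) (at s)))
      has_integral exp (-t) * path_len \<gamma>) {0..1}"
    by (intro has_integral_spike_finite[OF K(1) _ has_integral_mult_right[OF int]]) auto
  have "(\<lambda>s. gflow t (\<gamma> s)) ` {0..1} \<subseteq> UT"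
    using im Hs_subset_UT[OF assms(1)] gflow_in_UT by blast
  then show "(\<lambda>s. gflow t (\<gamma> s)) \<in> admissible_paths UT (gflow t xu) (gflow t xs)"
    using \<gamma> len piecewise_C1_differentiable_bounded_linear[OF bounded_linear_gflow pc]
    by (auto simp: admissible_paths_def has_integral_integrable)
  show "path_len (\<lambda>s. gflow t (\<gamma> s)) = exp (-t) * path_len \<gamma>"
    unfolding path_len_def[of "\<lambda>s. gflow t (\<gamma> s)"] using len by (rule integral_unique)
qed

lemma dX_gflow_le_path_dist_Hs:
  assumes "0 \<le> t" and "xu \<in> UT" and "xs \<in> Hs xu"
  shows "admissible_paths UT (gflow t xu) (gflow t xs) \<noteq> {}"
    and "dX (gflow t xu) (gflow t xs) \<le> path_dist (Hs xu) xu xs"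
proof -
  show "admissible_paths UT (gflow t xu) (gflow t xs) \<noteq> {}"
    using Hs_admissible_paths_nonempty[OF assms(2,3)] gflow_Hs_path(1)[OF assms(2)] by blast
  have "dX (gflow t xu) (gflow t xs) \<le> path_len \<gamma>" if \<gamma>: "\<gamma> \<in> admissible_paths (Hs xu) xu xs" for \<gamma>
  proof -
    have "dX (gflow t xu) (gflow t xs) \<le> exp (-t) * path_len \<gamma>"
      using path_dist_le_path_len[OF gflow_Hs_path(1)[OF assms(2) \<gamma>]]
      by (simp add: dX_def gflow_Hs_path(2)[OF assms(2) \<gamma>])
    also have "\<dots> \<le> path_len \<gamma>"
      using path_len_nonneg[OF \<gamma> Hs_subset_UT[OF assms(2)]] assms(1)
      by (simp add: mult_left_le_one_le)
    finally show ?thesis .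
  qed
  then show "dX (gflow t xu) (gflow t xs) \<le> path_dist (Hs xu) xu xs"
    unfolding path_dist_eq_Inf using Hs_admissible_paths_nonempty[OF assms(2,3)]
    by (intro cInf_greatest) auto
qed

theorem lemma10p14:
  fixes D :: "(TX) set" and t \<epsilon> xf :: real and xu xs :: "TX"
  assumes "is_view D"
    and "0 \<le> t" and "0 < \<epsilon>" and "\<epsilon> < 1"
    and "(xu, xf, xs) \<in> D_eps D \<epsilon>"
  shows "dX (gflow t xu) (gflow t (coord xu xf xs)) \<le> 2 * \<epsilon>"
proof -
  have "xu \<in> D" and xf: "\<bar>xf\<bar> < \<epsilon>" and xs: "xs \<in> Hs xu" "path_dist (Hs xu) xu xs \<le> \<epsilon>"
    using assms(5) by (auto simp: D_eps_def Bs_def)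
  then have xu: "xu \<in> UT" using view_subset_UT[OF assms(1)] by blast
  then have y: "gflow t xs \<in> UT" using xs(1) Hs_subset_UT gflow_in_UT by blast
  have "gflow t (coord xu xf xs) = gflow xf (gflow t xs)"
    by (simp add: coord_def gflow_add add.commute)
  then have "dX (gflow t xu) (gflow t (coord xu xf xs))
      \<le> dX (gflow t xu) (gflow t xs) + dX (gflow t xs) (gflow xf (gflow t xs))"
    using dX_gflow_le_path_dist_Hs(1)[OF assms(2) xu xs(1)] gflow_orbit_admissible(1)[OF y]
    unfolding dX_def by (auto intro: path_dist_triangle)
  also have "\<dots> \<le> \<epsilon> + \<bar>xf\<bar>"
    using dX_gflow_le_path_dist_Hs(2)[OF assms(2) xu xs(1)] xs(2) dX_gflow_le[OF y, of xf] by linarith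
  also have "\<dots> \<le> 2 * \<epsilon>"
    using xf by simp
  finally show ?thesis .
qed

end
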